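(* Let $d$ be a positive integer and let $M$ be the $d\times d$ lower triangular integer matrix with entries $M_{ij}=\binom{i}{j}$ for $1\leqslant j\leqslant i\leqslant d$ and $M_{ij}=0$ for $j>i$. Call a vector $r\in\mathbb{R}^d$ stable if for every $k\in\mathbb{N}_{>0}$ the last coordinate of $M^k r$ is an integer. Then the set of all stable vectors is a discrete subgroup of $\mathbb{R}^d$. *)

theory Defs
  imports Complex_Main "Jordan_Normal_Form.Matrix"
begin

text \<open>Vectors of R^d are modelled as JNF vectors in carrier_vec d, with indices 0..d-1;
  paper index i (1-based) corresponds to JNF index i-1.\<close>

definition binom_mat :: "nat \<Rightarrow> int mat" where
  "binom_mat d = mat d d (\<lambda>(i, j). int (Suc i choose Suc j))"

definition vec_dist :: "nat \<Rightarrow> real vec \<Rightarrow> real vec \<Rightarrow> real" where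
  "vec_dist d r s = sqrt (\<Sum>i<d. (r $ i - s $ i)^2)"

definition stable :: "nat \<Rightarrow> real vec \<Rightarrow> bool" where
  "stable d r \<longleftrightarrow> r \<in> carrier_vec d \<and>
     (\<forall>k::nat. k > 0 \<longrightarrow>
        ((map_mat real_of_int (binom_mat d)) ^\<^sub>m k *\<^sub>v r) $ (d - 1) \<in> \<int>)"

definition is_subgroup_vec :: "nat \<Rightarrow> real vec set \<Rightarrow> bool" where
  "is_subgroup_vec d S \<longleftrightarrow> S \<subseteq> carrier_vec d \<and> 0\<^sub>v d \<in> S \<and>
     (\<forall>x\<in>S. \<forall>y\<in>S. x + y \<in> S) \<and> (\<forall>x\<in>S. - x \<in> S)"

definition discrete_vec :: "nat \<Rightarrow> real vec set \<Rightarrow> bool" where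
  "discrete_vec d S \<longleftrightarrow>
     (\<forall>r\<in>S. \<exists>e>0. \<forall>s\<in>S. vec_dist d r s < e \<longrightarrow> s = r)"

end

theory Submission
  imports Defs "HOL-Computational_Algebra.Polynomial"
begin

text \<open>Let \<open>P(x)\<close> be the lower triangular matrix with entries \<open>(i+1 choose j+1) x^(i-j)\<close>.
  The identity \<open>(i+1 choose l+1) (l+1 choose j+1) = (i+1 choose j+1) (i-j choose l-j)\<close> together
  with the binomial theorem gives \<open>P(x) P(y) = P(x + y)\<close>; as \<open>M = P(1)\<close>, we get \<open>M^k = P(k)\<close>.
  Hence the last coordinate of \<open>M^k r\<close> is \<open>p_r(k)\<close> for a polynomial \<open>p_r\<close> of degree \<open>< d\<close>
  that depends linearly and injectively on \<open>r\<close>, so the stable vectors form a subgroup.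
  If \<open>r\<close> is stable with small coordinates, then \<open>p_r(1), ..., p_r(d)\<close> are integers of
  absolute value \<open>< 1\<close>, hence zero; so \<open>p_r = 0\<close> and \<open>r = 0\<close>. A subgroup in which \<open>0\<close> is
  isolated is discrete.\<close>

definition pascal_mat :: "nat \<Rightarrow> 'a::comm_semiring_1 \<Rightarrow> 'a mat" where
  "pascal_mat d x =
     mat d d (\<lambda>(i, j). if j \<le> i then of_nat (Suc i choose Suc j) * x ^ (i - j) else 0)"

lemma sum_choose_mult_powers:
  fixes x y :: "'a::comm_semiring_1"
  assumes "j \<le> i"
  shows "(\<Sum>l=j..i. of_nat (Suc i choose Suc l) * x ^ (i - l) * (of_nat (Suc l choose Suc j) * y ^ (l - j)))
       = of_nat (Suc i choose Suc j) * (x + y) ^ (i - j)"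
proof -
  have choose: "(Suc i choose Suc l) * (Suc l choose Suc j) = (Suc i choose Suc j) * ((i - j) choose (l - j))"
    if "l \<in> {j..i}" for l
    using that choose_mult[of "Suc j" "Suc l" "Suc i"] by simp
  have "(\<Sum>l=j..i. of_nat (Suc i choose Suc l) * x ^ (i - l) * (of_nat (Suc l choose Suc j) * y ^ (l - j)))
      = of_nat (Suc i choose Suc j) * (\<Sum>l=j..i. of_nat ((i - j) choose (l - j)) * y ^ (l - j) * x ^ (i - l))"
    unfolding sum_distrib_left
  proof (rule sum.cong[OF refl])
    fix l assume "l \<in> {j..i}"
    then have "of_nat (Suc i choose Suc l) * of_nat (Suc l choose Suc j)
        = of_nat (Suc i choose Suc j) * (of_nat ((i - j) choose (l - j)) :: 'a)"
      using choose by (metis of_nat_mult)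
    moreover have "of_nat (Suc i choose Suc l) * x ^ (i - l) * (of_nat (Suc l choose Suc j) * y ^ (l - j))
        = (of_nat (Suc i choose Suc l) * of_nat (Suc l choose Suc j)) * (y ^ (l - j) * x ^ (i - l))"
      by (simp only: ac_simps)
    ultimately show "of_nat (Suc i choose Suc l) * x ^ (i - l) * (of_nat (Suc l choose Suc j) * y ^ (l - j))
        = of_nat (Suc i choose Suc j) * (of_nat ((i - j) choose (l - j)) * y ^ (l - j) * x ^ (i - l))"
      by (simp only: ac_simps)
  qed
  also have "(\<Sum>l=j..i. of_nat ((i - j) choose (l - j)) * y ^ (l - j) * x ^ (i - l))
      = (\<Sum>t\<le>i - j. of_nat ((i - j) choose t) * y ^ t * x ^ (i - j - t))"
    using assms by (intro sum.reindex_bij_witness[of _ "\<lambda>t. t + j" "\<lambda>l. l - j"]) auto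
  also have "\<dots> = (y + x) ^ (i - j)"
    by (rule binomial_ring[symmetric])
  finally show ?thesis
    by (simp add: add.commute)
qed

lemma dim_pascal_mat [simp]:
  "dim_row (pascal_mat d x) = d" "dim_col (pascal_mat d x) = d"
  by (simp_all add: pascal_mat_def)

lemma pascal_mat_zero: "pascal_mat d 0 = 1\<^sub>m d"
  by (rule eq_matI) (auto simp: pascal_mat_def power_0_left)

lemma pascal_mat_mult: "pascal_mat d x * pascal_mat d y = pascal_mat d (x + y)"
proof (rule eq_matI)
  fix i j assume "i < dim_row (pascal_mat d (x + y))" "j < dim_col (pascal_mat d (x + y))"
  then have i: "i < d" and j: "j < d"
    by simp_all
  let ?term = "\<lambda>l. of_nat (Suc i choose Suc l) * x ^ (i - l) * (of_nat (Suc l choose Suc j) * y ^ (l - j))"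
  have "(pascal_mat d x * pascal_mat d y) $$ (i, j) = (\<Sum>l<d. if j \<le> l \<and> l \<le> i then ?term l else 0)"
    using i j by (auto simp: pascal_mat_def scalar_prod_def atLeast0LessThan intro!: sum.cong)
  also have "\<dots> = (\<Sum>l\<in>{j..i}. ?term l)"
    using i by (intro sum.mono_neutral_cong_right) auto
  also have "\<dots> = pascal_mat d (x + y) $$ (i, j)"
    using i j sum_choose_mult_powers[of j i x y] by (simp add: pascal_mat_def)
  finally show "(pascal_mat d x * pascal_mat d y) $$ (i, j) = pascal_mat d (x + y) $$ (i, j)" .
qed simp_all

lemma pascal_mat_power: "pascal_mat d 1 ^\<^sub>m n = pascal_mat d (of_nat n)"
  by (induction n) (simp_all add: pascal_mat_zero pascal_mat_mult add.commute)

lemma binom_mat_eq_pascal_mat: "map_mat real_of_int (binom_mat d) = pascal_mat d 1"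
  by (rule eq_matI) (auto simp: pascal_mat_def binom_mat_def binomial_eq_0)

definition last_coord_poly :: "nat \<Rightarrow> 'a::comm_semiring_1 vec \<Rightarrow> 'a poly" where
  "last_coord_poly d r = (\<Sum>j<d. monom (of_nat (d choose Suc j) * r $ j) (d - 1 - j))"

lemma poly_last_coord_poly:
  "poly (last_coord_poly d r) x = (\<Sum>j<d. of_nat (d choose Suc j) * x ^ (d - 1 - j) * r $ j)"
  by (simp add: last_coord_poly_def poly_sum poly_monom ac_simps)

lemma last_coord_pascal_mat_mult_vec:
  assumes "d > 0" "r \<in> carrier_vec d"
  shows "(pascal_mat d x *\<^sub>v r) $ (d - 1) = poly (last_coord_poly d r) x"
  using assms
  by (auto simp: poly_last_coord_poly pascal_mat_def scalar_prod_def atLeast0LessThan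
      simp del: binomial_Suc_Suc intro!: sum.cong)

lemma last_coord_poly_add:
  assumes "r \<in> carrier_vec d" "s \<in> carrier_vec d"
  shows "last_coord_poly d (r + s) = last_coord_poly d r + last_coord_poly d s"
  using assms by (simp add: last_coord_poly_def add_monom distrib_left sum.distrib[symmetric])

lemma last_coord_poly_uminus:
  fixes r :: "'a::comm_ring_1 vec"
  assumes "r \<in> carrier_vec d"
  shows "last_coord_poly d (- r) = - last_coord_poly d r"
  using assms by (simp add: last_coord_poly_def minus_monom sum_negf[symmetric])

lemma last_coord_poly_zero [simp]: "last_coord_poly d (0\<^sub>v d) = 0"
  by (simp add: last_coord_poly_def)

lemma degree_last_coord_poly:
  assumes "d > 0"
  shows "degree (last_coord_poly d r) < d"
proof -
  have "degree (last_coord_poly d r) \<le> d - 1"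
    unfolding last_coord_poly_def
    by (intro degree_sum_le) (auto intro: order.trans[OF degree_monom_le])
  with assms show ?thesis
    by linarith
qed

lemma coeff_last_coord_poly:
  assumes "j < d"
  shows "coeff (last_coord_poly d r) (d - 1 - j) = of_nat (d choose Suc j) * r $ j"
proof -
  have "coeff (last_coord_poly d r) (d - 1 - j)
      = (\<Sum>l<d. if l = j then of_nat (d choose Suc l) * r $ l else 0)"
    unfolding last_coord_poly_def coeff_sum coeff_monom
    using assms by (intro sum.cong) auto
  with assms show ?thesis
    by simp
qed

lemma last_coord_poly_eq_0_iff:
  fixes r :: "'a::{semiring_char_0, semiring_no_zero_divisors, comm_semiring_1} vec"
  assumes "r \<in> carrier_vec d"
  shows "last_coord_poly d r = 0 \<longleftrightarrow> r = 0\<^sub>v d"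
proof
  assume "last_coord_poly d r = 0"
  then have "of_nat (d choose Suc j) * r $ j = 0" if "j < d" for j
    using coeff_last_coord_poly[OF that, of r] by simp
  then show "r = 0\<^sub>v d"
    using assms by (intro eq_vecI) auto
qed simp

lemma abs_poly_last_coord_poly_le:
  fixes t :: "'a::linordered_idom vec"
  assumes "\<forall>j<d. \<bar>t $ j\<bar> \<le> m"
  shows "\<bar>poly (last_coord_poly d t) x\<bar> \<le> (\<Sum>j<d. of_nat (d choose Suc j) * \<bar>x\<bar> ^ (d - 1 - j)) * m"
proof -
  have "\<bar>poly (last_coord_poly d t) x\<bar> \<le> (\<Sum>j<d. \<bar>of_nat (d choose Suc j) * x ^ (d - 1 - j) * t $ j\<bar>)"
    unfolding poly_last_coord_poly by (rule sum_abs)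
  also have "\<dots> \<le> (\<Sum>j<d. of_nat (d choose Suc j) * \<bar>x\<bar> ^ (d - 1 - j) * m)"
    using assms by (intro sum_mono) (auto simp: abs_mult power_abs intro!: mult_left_mono)
  finally show ?thesis
    by (simp add: sum_distrib_right)
qed

lemma poly_eq_0_if_small_Ints:
  fixes p :: "'a::linordered_idom poly"
  assumes "degree p < n"
    and "\<And>k. k \<in> {1..n} \<Longrightarrow> poly p (of_nat k) \<in> \<int> \<and> \<bar>poly p (of_nat k)\<bar> < 1"
  shows "p = 0"
proof (rule poly_eqI_degree)
  show "poly p x = poly 0 x" if "x \<in> of_nat ` {1..n}" for x
    using that assms(2) Ints_nonzero_abs_less1 by fastforce
  have "card (of_nat ` {1..n} :: 'a set) = n"
    by (simp add: card_image inj_on_def)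
  then show "degree p < card (of_nat ` {1..n} :: 'a set)" "degree 0 < card (of_nat ` {1..n} :: 'a set)"
    using assms(1) by simp_all
qed

lemma stable_iff_last_coord_poly:
  assumes "d > 0"
  shows "stable d r \<longleftrightarrow> r \<in> carrier_vec d \<and> (\<forall>k>0. poly (last_coord_poly d r) (real k) \<in> \<int>)"
proof -
  have "(pascal_mat d 1 ^\<^sub>m k *\<^sub>v r) $ (d - 1) = poly (last_coord_poly d r) (real k)"
    if "r \<in> carrier_vec d" for k
    unfolding pascal_mat_power using assms that by (rule last_coord_pascal_mat_mult_vec)
  then show ?thesis
    unfolding stable_def binom_mat_eq_pascal_mat by auto
qed

lemma is_subgroup_vec_stable:
  assumes "d > 0"
  shows "is_subgroup_vec d {r. stable d r}"
  unfolding is_subgroup_vec_def stable_iff_last_coord_poly[OF assms]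
  by (auto simp: last_coord_poly_add last_coord_poly_uminus)

lemma stable_isolated_zero:
  assumes "d > 0"
  obtains e :: real where "e > 0" "\<And>t. stable d t \<Longrightarrow> \<forall>j<d. \<bar>t $ j\<bar> < e \<Longrightarrow> t = 0\<^sub>v d"
proof
  define C where "C = (\<Sum>j<d. real (d choose Suc j) * real d ^ (d - 1 - j))"
  have "C \<ge> 0"
    unfolding C_def by (intro sum_nonneg) auto
  then show "1 / (C + 1) > 0"
    by simp
  fix t assume stable: "stable d t" and small: "\<forall>j<d. \<bar>t $ j\<bar> < 1 / (C + 1)"
  have "\<bar>poly (last_coord_poly d t) (real k)\<bar> < 1" if "k \<in> {1..d}" for k
  proof -
    have "\<forall>j<d. \<bar>t $ j\<bar> \<le> 1 / (C + 1)"
      using small by (auto simp: less_imp_le)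
    from abs_poly_last_coord_poly_le[OF this, of "real k"]
    have "\<bar>poly (last_coord_poly d t) (real k)\<bar>
        \<le> (\<Sum>j<d. real (d choose Suc j) * real k ^ (d - 1 - j)) * (1 / (C + 1))"
      by simp
    also have "\<dots> \<le> C * (1 / (C + 1))"
    proof (rule mult_right_mono)
      show "(\<Sum>j<d. real (d choose Suc j) * real k ^ (d - 1 - j)) \<le> C"
        unfolding C_def using that by (intro sum_mono mult_left_mono power_mono) auto
    qed (use \<open>C \<ge> 0\<close> in simp)
    also have "\<dots> < 1"
      using \<open>C \<ge> 0\<close> by (simp add: field_simps)
    finally show ?thesis .
  qed
  then have "last_coord_poly d t = 0"
    using assms stable stable_iff_last_coord_poly[OF assms, of t]
    by (intro poly_eq_0_if_small_Ints[of _ d] degree_last_coord_poly) auto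
  then show "t = 0\<^sub>v d"
    using stable last_coord_poly_eq_0_iff by (auto simp: stable_def)
qed

lemma abs_diff_le_vec_dist:
  assumes "j < d"
  shows "\<bar>r $ j - s $ j\<bar> \<le> vec_dist d r s"
proof -
  have "(r $ j - s $ j)\<^sup>2 \<le> (\<Sum>i<d. (r $ i - s $ i)\<^sup>2)"
    using assms by (intro member_le_sum) auto
  then show ?thesis
    unfolding vec_dist_def by (metis real_sqrt_abs real_sqrt_le_mono)
qed

lemma discrete_vec_if_isolated_zero:
  assumes subgroup: "is_subgroup_vec d S" and "e > 0"
    and isolated: "\<And>t. t \<in> S \<Longrightarrow> \<forall>j<d. \<bar>t $ j\<bar> < e \<Longrightarrow> t = 0\<^sub>v d"
  shows "discrete_vec d S"
  unfolding discrete_vec_def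
proof (intro ballI exI[of _ e] conjI impI)
  fix r s assume "r \<in> S" "s \<in> S" and close: "vec_dist d r s < e"
  then have carrier: "r \<in> carrier_vec d" "s \<in> carrier_vec d" and "s + - r \<in> S"
    using subgroup by (auto simp: is_subgroup_vec_def)
  moreover have "\<forall>j<d. \<bar>(s + - r) $ j\<bar> < e"
    using carrier close abs_diff_le_vec_dist[of _ d r s] by fastforce
  ultimately have "s + - r = 0\<^sub>v d"
    using isolated by blast
  moreover have "s = (s + - r) + r"
    using carrier by simp
  ultimately show "s = r"
    using carrier by simp
qed (use \<open>e > 0\<close> in blast)

theorem mainTheorem4:
  fixes d :: nat
  assumes "d > 0"
  shows "is_subgroup_vec d {r. stable d r} \<and> discrete_vec d {r. stable d r}"
proof -
  have subgroup: "is_subgroup_vec d {r. stable d r}"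
    using assms by (rule is_subgroup_vec_stable)
  obtain e where "e > 0" and "\<And>t. stable d t \<Longrightarrow> \<forall>j<d. \<bar>t $ j\<bar> < e \<Longrightarrow> t = 0\<^sub>v d"
    using stable_isolated_zero[OF assms] by blast
  then have "discrete_vec d {r. stable d r}"
    by (intro discrete_vec_if_isolated_zero[OF subgroup]) auto
  with subgroup show ?thesis ..
qed

end
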